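(* Let $W$ be an eventually periodic subset of $\mathbb{Z}^d$ with periods $u_1,\dots,u_d$, and let $\mathscr{W}_1,\mathcal{W}$ be as defined in the context. Suppose $\mathscr{W}_1$ is nonempty. Then $W$ has a minimal complement in $\mathbb{Z}^d$ if either of the following holds: (1) $\pi(\mathcal{W}\cup\mathscr{W}_1)$ is a translate of a subgroup of $\mathbb{Z}^d/\mathcal{L}$; (2) every nontrivial element of $\mathbb{Z}^d/\mathcal{L}$ has order two, and either (a) each of $\pi(\mathscr{W}_1),\pi(\mathcal{W})$ is a singleton, or (b) the complement of $\pi(\mathscr{W}_1\cup\mathcal{W})$ in $\mathbb{Z}^d/\mathcal{L}$ is a singleton.
   Context: $d\geqslant1$, $\mathbb{N}=\{0,1,2,\dots\}$. Let $u_1,\dots,u_d\in\mathbb{Z}^d$ satisfy no nontrivial $\mathbb{Z}$-linear relation, $\mathcal{L}=\mathbb{Z}u_1+\dots+\mathbb{Z}u_d$, $P=\mathbb{N}u_1+\dots+\mathbb{N}u_d$, $\pi:\mathbb{Z}^d\to\mathbb{Z}^d/\mathcal{L}$ the quotient map. A nonempty $X\subseteq\mathbb{Z}^d$ is eventually periodic with periods $u_1,\dots,u_d$ if $X\subseteq F+P$ for some nonempty finite $F\subseteq\mathbb{Z}^d$ and $x+P\subseteq X$ for all but finitely many $x\in X$. For such $W$: $\mathscr{W}=\{w\in W:w+P\not\subseteq W\}$; $\mathcal{W}=\{w\in W\setminus\mathscr{W}:(w-P)\cap(W\setminus\mathscr{W})=\{w\}\}$; $\mathscr{W}_1$ is the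 set of elements of $\mathscr{W}$ congruent modulo $\mathcal{L}$ to no element of $\mathcal{W}$. A nonempty $M\subseteq\mathbb{Z}^d$ is a complement of $W$ if $M+W=\mathbb{Z}^d$, and a minimal complement if no proper subset of $M$ is a complement of $W$. *)

theory Defs
  imports "HOL-Analysis.Analysis" "HOL-Algebra.Algebra"
begin

text \<open>Z^d is modelled as int ^ 'n, with d = CARD('n).\<close>

definition lin_indep_Z :: "('n::finite \<Rightarrow> int ^ 'n) \<Rightarrow> bool" where
  "lin_indep_Z u \<longleftrightarrow> (\<forall>c::'n \<Rightarrow> int. (\<Sum>i\<in>UNIV. c i *s u i) = 0 \<longrightarrow> (\<forall>i. c i = 0))"

definition latt :: "('n::finite \<Rightarrow> int ^ 'n) \<Rightarrow> (int ^ 'n) set" where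
  "latt u = {(\<Sum>i\<in>UNIV. c i *s u i) | c::'n \<Rightarrow> int. True}"

definition pcone :: "('n::finite \<Rightarrow> int ^ 'n) \<Rightarrow> (int ^ 'n) set" where
  "pcone u = {(\<Sum>i\<in>UNIV. c i *s u i) | c::'n \<Rightarrow> int. \<forall>i. 0 \<le> c i}"

definition eventually_periodic :: "('n::finite \<Rightarrow> int ^ 'n) \<Rightarrow> (int ^ 'n) set \<Rightarrow> bool" where
  "eventually_periodic u S \<longleftrightarrow> S \<noteq> {} \<and>
     (\<exists>F. finite F \<and> F \<noteq> {} \<and> S \<subseteq> {f + p | f p. f \<in> F \<and> p \<in> pcone u}) \<and>
     finite {x \<in> S. \<not> ((\<lambda>p. x + p) ` pcone u \<subseteq> S)}"

definition scrW :: "('n::finite \<Rightarrow> int ^ 'n) \<Rightarrow> (int ^ 'n) set \<Rightarrow> (int ^ 'n) set" where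
  "scrW u W = {w \<in> W. \<not> ((\<lambda>p. w + p) ` pcone u \<subseteq> W)}"

definition calW :: "('n::finite \<Rightarrow> int ^ 'n) \<Rightarrow> (int ^ 'n) set \<Rightarrow> (int ^ 'n) set" where
  "calW u W = {w \<in> W - scrW u W. (\<lambda>p. w - p) ` pcone u \<inter> (W - scrW u W) = {w}}"

definition scrW1 :: "('n::finite \<Rightarrow> int ^ 'n) \<Rightarrow> (int ^ 'n) set \<Rightarrow> (int ^ 'n) set" where
  "scrW1 u W = {w \<in> scrW u W. \<not> (\<exists>v \<in> calW u W. w - v \<in> latt u)}"

definition is_complement :: "(int ^ 'n) set \<Rightarrow> (int ^ 'n) set \<Rightarrow> bool" where
  "is_complement M W \<longleftrightarrow> M \<noteq> {} \<and> {m + w | m w. m \<in> M \<and> w \<in> W} = UNIV"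

definition is_minimal_complement :: "(int ^ 'n) set \<Rightarrow> (int ^ 'n) set \<Rightarrow> bool" where
  "is_minimal_complement M W \<longleftrightarrow> is_complement M W \<and> (\<forall>M'. M' \<subset> M \<longrightarrow> \<not> is_complement M' W)"

definition Zgrp :: "(int ^ 'n) monoid" where
  "Zgrp = \<lparr>carrier = UNIV, monoid.mult = (+), one = 0\<rparr>"

definition Qgrp :: "('n::finite \<Rightarrow> int ^ 'n) \<Rightarrow> (int ^ 'n) set monoid" where
  "Qgrp u = Zgrp Mod latt u"

definition qmap :: "('n::finite \<Rightarrow> int ^ 'n) \<Rightarrow> int ^ 'n \<Rightarrow> (int ^ 'n) set" where
  "qmap u x = latt u #>\<^bsub>Zgrp\<^esub> x"

end

theory Submission
  imports Defs
begin

text \<open>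
Write \<open>T = calW u W \<union> scrW1 u W\<close> and \<open>A = scrW1 u W\<close>. The proof rests on a criterion:
suppose \<open>K + T + L = \<int>\<^sup>d\<close> and some \<open>s \<in> A\<close> is such that \<open>k + s \<equiv> k' + t (mod L)\<close> with
\<open>k, k' \<in> K\<close> and \<open>t \<in> T\<close> forces \<open>k = k'\<close>. Let \<open>Y\<close> be the set of points not congruent to
any element of \<open>K + calW u W\<close>. Since \<open>A\<close> is finite, Zorn's lemma gives a subset \<open>M\<close> of
\<open>K + L\<close> that is minimal with \<open>Y \<subseteq> M + A\<close>. This \<open>M\<close> is a complement: a point
\<open>x \<equiv> k + c\<close> with \<open>c \<in> calW u W\<close> equals \<open>(y - a) + (c + q + a - s)\<close>, where
\<open>y = x - c + s - q \<in> Y\<close>, \<open>y - a \<in> M\<close>, and the cone element \<open>q\<close> is chosen so large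
that \<open>q + a - s\<close> lies in the cone whenever \<open>a - s \<in> L\<close>, whence \<open>c + q + a - s \<in> W\<close>.
It is a minimal complement because every element of \<open>W\<close> outside \<open>A\<close> is congruent to an
element of \<open>calW u W\<close> (it lies above a minimal element of \<open>W - scrW u W\<close>), so a proper
subset of \<open>M\<close> misses a point of \<open>Y\<close>.

In case (1), \<open>K\<close> is a set of representatives of \<open>\<int>\<^sup>d\<close> modulo the preimage of the
subgroup. Case (2a) reduces to (1), because in a group of exponent two
\<open>{a, b} = b {1, ba}\<close>. In case (2b), \<open>K = {0, s + c}\<close> where \<open>c\<close> represents the missing class.
\<close>

section \<open>Lattice and cone\<close>

definition lincomb :: "('n::finite \<Rightarrow> int ^ 'n) \<Rightarrow> ('n \<Rightarrow> int) \<Rightarrow> int ^ 'n" where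
  "lincomb u c = (\<Sum>i\<in>UNIV. c i *s u i)"

lemma lincomb_add: "lincomb u (\<lambda>i. a i + b i) = lincomb u a + lincomb u b"
  by (simp add: lincomb_def vector_sadd_rdistrib sum.distrib)

lemma lincomb_diff: "lincomb u (\<lambda>i. a i - b i) = lincomb u a - lincomb u b"
  by (simp add: lincomb_def vector_sub_rdistrib sum_subtractf)

lemma lincomb_zero [simp]: "lincomb u (\<lambda>i. 0) = 0"
  by (simp add: lincomb_def)

lemma lincomb_inj:
  assumes "lin_indep_Z u"
  shows "inj (lincomb u)"
proof (rule injI)
  fix a b assume "lincomb u a = lincomb u b"
  then have "(\<Sum>i\<in>UNIV. (a i - b i) *s u i) = 0"
    using lincomb_diff[of u a b] by (simp add: lincomb_def)
  with assms have "\<forall>i. a i - b i = 0"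
    unfolding lin_indep_Z_def by (elim allE[of _ "\<lambda>i. a i - b i"]) simp
  then show "a = b"
    by (simp add: fun_eq_iff)
qed

lemma latt_eq_range_lincomb: "latt u = range (lincomb u)"
  by (auto simp: latt_def lincomb_def)

lemma pcone_eq_lincomb: "pcone u = {lincomb u c | c. \<forall>i. 0 \<le> c i}"
  by (auto simp: pcone_def lincomb_def)

lemma zero_in_latt: "0 \<in> latt u"
  unfolding latt_eq_range_lincomb using lincomb_zero by (metis rangeI)

lemma latt_add: "x \<in> latt u \<Longrightarrow> y \<in> latt u \<Longrightarrow> x + y \<in> latt u"
  unfolding latt_eq_range_lincomb by (auto simp flip: lincomb_add)

lemma latt_diff: "x \<in> latt u \<Longrightarrow> y \<in> latt u \<Longrightarrow> x - y \<in> latt u"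
  unfolding latt_eq_range_lincomb by (auto simp flip: lincomb_diff)

lemma latt_uminus: "x \<in> latt u \<Longrightarrow> - x \<in> latt u"
  using latt_diff[OF zero_in_latt] by fastforce

lemma latt_add_eqI: "a \<in> latt u \<Longrightarrow> b \<in> latt u \<Longrightarrow> x = a + b \<Longrightarrow> x \<in> latt u"
  by (simp add: latt_add)

lemma latt_diff_eqI: "a \<in> latt u \<Longrightarrow> b \<in> latt u \<Longrightarrow> x = a - b \<Longrightarrow> x \<in> latt u"
  by (simp add: latt_diff)

lemma zero_in_pcone: "0 \<in> pcone u"
  unfolding pcone_eq_lincomb by (auto intro!: exI[of _ "\<lambda>i. 0"])

lemma pcone_add: "x \<in> pcone u \<Longrightarrow> y \<in> pcone u \<Longrightarrow> x + y \<in> pcone u"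
  unfolding pcone_eq_lincomb by (force simp flip: lincomb_add)

lemma pcone_subset_latt: "pcone u \<subseteq> latt u"
  unfolding pcone_eq_lincomb latt_eq_range_lincomb by auto

lemma finite_latt_shift_into_pcone:
  assumes "finite E" "E \<subseteq> latt u"
  shows "\<exists>q\<in>pcone u. \<forall>e\<in>E. q + e \<in> pcone u"
  using assms
proof (induction E rule: finite_induct)
  case empty
  then show ?case using zero_in_pcone by blast
next
  case (insert e E)
  then obtain q where q: "q \<in> pcone u" "\<forall>e\<in>E. q + e \<in> pcone u" by auto
  obtain a where e: "e = lincomb u a" using insert.prems unfolding latt_eq_range_lincomb by auto
  define r where "r = lincomb u (\<lambda>i. \<bar>a i\<bar>)"
  have r: "r \<in> pcone u" unfolding r_def pcone_eq_lincomb by auto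
  have "r + e = lincomb u (\<lambda>i. \<bar>a i\<bar> + a i)" unfolding r_def e by (simp add: lincomb_add)
  then have "r + e \<in> pcone u" unfolding pcone_eq_lincomb by fastforce
  then have "(q + r) + e \<in> pcone u" using pcone_add[OF q(1)] by (simp add: add.assoc)
  moreover have "(q + r) + e' \<in> pcone u" if "e' \<in> E" for e'
    using pcone_add[OF q(2)[rule_format, OF that] r] by (simp add: algebra_simps)
  ultimately show ?case using pcone_add[OF q(1) r] by blast
qed

section \<open>The quotient group\<close>

lemma (in group) mem_left_translate_iff:
  assumes "g \<in> carrier G" "H \<subseteq> carrier G" "y \<in> carrier G"
  shows "y \<in> (\<lambda>h. g \<otimes> h) ` H \<longleftrightarrow> inv g \<otimes> y \<in> H"
proof
  assume "y \<in> (\<lambda>h. g \<otimes> h) ` H"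
  then obtain h where "h \<in> H" "y = g \<otimes> h" by blast
  moreover from this have "inv g \<otimes> y = h"
    using assms by (simp add: m_assoc [symmetric] subsetD)
  ultimately show "inv g \<otimes> y \<in> H" by simp
next
  assume "inv g \<otimes> y \<in> H"
  moreover have "y = g \<otimes> (inv g \<otimes> y)" using assms by (simp add: m_assoc [symmetric])
  ultimately show "y \<in> (\<lambda>h. g \<otimes> h) ` H" by blast
qed

lemma (in group) mult_self_eq_one_if_orders_two:
  assumes "\<forall>x\<in>carrier G. x \<noteq> \<one> \<longrightarrow> ord x = 2" and x: "x \<in> carrier G"
  shows "x \<otimes> x = \<one>"
proof (cases "x = \<one>")
  case False
  then have "x [^] (2::nat) = \<one>" using assms pow_ord_eq_1[OF x] by simp
  then show ?thesis using x by (simp add: numeral_2_eq_2)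
qed simp

lemma (in group) pair_eq_left_coset_if_exponent_two:
  assumes sq: "\<And>x. x \<in> carrier G \<Longrightarrow> x \<otimes> x = \<one>"
    and a: "a \<in> carrier G" and b: "b \<in> carrier G"
  shows "subgroup {\<one>, b \<otimes> a} G" and "{a, b} = (\<lambda>h. b \<otimes> h) ` {\<one>, b \<otimes> a}"
proof -
  have inv_self: "inv x = x" if "x \<in> carrier G" for x
    using inv_equality[OF sq[OF that] that that] .
  have "b \<otimes> (b \<otimes> a) = a" using a b sq[OF b] by (simp add: m_assoc [symmetric])
  then show "{a, b} = (\<lambda>h. b \<otimes> h) ` {\<one>, b \<otimes> a}" using b by auto
  show "subgroup {\<one>, b \<otimes> a} G"
  proof (rule subgroupI)
    fix h h' assume "h \<in> {\<one>, b \<otimes> a}" "h' \<in> {\<one>, b \<otimes> a}"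
    then show "inv h \<in> {\<one>, b \<otimes> a}" "h \<otimes> h' \<in> {\<one>, b \<otimes> a}"
      using a b sq[of "b \<otimes> a"] inv_self[of "b \<otimes> a"] by auto
  qed (use a b in auto)
qed

lemma Zgrp_simps [simp]: "carrier Zgrp = UNIV" "x \<otimes>\<^bsub>Zgrp\<^esub> y = x + y" "\<one>\<^bsub>Zgrp\<^esub> = 0"
  by (simp_all add: Zgrp_def)

lemma Zgrp_comm_group: "comm_group (Zgrp :: (int ^ 'n) monoid)"
  by (rule comm_groupI) (auto simp: add.assoc add.commute intro: exI[of _ "- x" for x])

lemma Zgrp_group: "group (Zgrp :: (int ^ 'n) monoid)"
  using Zgrp_comm_group comm_group.axioms(2) by blast

lemma Zgrp_inv [simp]: "inv\<^bsub>Zgrp\<^esub> (x :: int ^ 'n) = - x"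
  by (rule group.inv_equality[OF Zgrp_group]) auto

lemma Zgrp_subgroup_add: "subgroup H Zgrp \<Longrightarrow> a \<in> H \<Longrightarrow> b \<in> H \<Longrightarrow> a + b \<in> H"
  by (metis Zgrp_simps(2) subgroup.m_closed)

lemma Zgrp_subgroup_diff: "subgroup H Zgrp \<Longrightarrow> a \<in> H \<Longrightarrow> b \<in> H \<Longrightarrow> a - b \<in> H"
  by (metis Zgrp_inv Zgrp_subgroup_add diff_conv_add_uminus subgroup.m_inv_closed)

lemma Zgrp_subgroup_add_eqI:
  "subgroup H Zgrp \<Longrightarrow> a \<in> H \<Longrightarrow> b \<in> H \<Longrightarrow> x = a + b \<Longrightarrow> x \<in> H"
  using Zgrp_subgroup_add by blast

lemma Zgrp_subgroup_diff_eqI: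
  "subgroup H Zgrp \<Longrightarrow> a \<in> H \<Longrightarrow> b \<in> H \<Longrightarrow> x = a - b \<Longrightarrow> x \<in> H"
  using Zgrp_subgroup_diff by blast

lemma latt_subgroup: "subgroup (latt u) Zgrp"
  by (rule group.subgroupI[OF Zgrp_group]) (auto intro: zero_in_latt latt_add latt_uminus)

lemma latt_normal: "latt u \<lhd> Zgrp"
  by (rule comm_group.subgroup_imp_normal[OF Zgrp_comm_group latt_subgroup])

lemma Qgrp_group: "group (Qgrp u)"
  unfolding Qgrp_def by (rule normal.factorgroup_is_group[OF latt_normal])

lemma qmap_group_hom: "group_hom Zgrp (Qgrp u) (qmap u)"
  unfolding group_hom_def group_hom_axioms_def qmap_def[abs_def] Qgrp_def
  using Zgrp_group normal.factorgroup_is_group[OF latt_normal] normal.r_coset_hom_Mod[OF latt_normal]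
  by blast

lemma qmap_add: "qmap u (a + b) = qmap u a \<otimes>\<^bsub>Qgrp u\<^esub> qmap u b"
  using group_hom.hom_mult[OF qmap_group_hom] by fastforce

lemma qmap_uminus: "qmap u (- a) = inv\<^bsub>Qgrp u\<^esub> qmap u a"
  using group_hom.hom_inv[OF qmap_group_hom] by fastforce

lemma qmap_zero: "qmap u 0 = \<one>\<^bsub>Qgrp u\<^esub>"
  using group_hom.hom_one[OF qmap_group_hom] by simp

lemma Qgrp_carrier: "carrier (Qgrp u) = range (qmap u)"
  by (auto simp: Qgrp_def FactGroup_def RCOSETS_def qmap_def)

lemma qmap_eq_iff: "qmap u x = qmap u y \<longleftrightarrow> x - y \<in> latt u"
proof -
  have "x \<in> latt u #>\<^bsub>Zgrp\<^esub> y \<longleftrightarrow> x - y \<in> latt u"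
    using subgroup.rcos_module[OF latt_subgroup Zgrp_group] by simp
  then show ?thesis
    unfolding qmap_def
    by (metis Zgrp_simps(1) UNIV_I group.repr_independence group.repr_independenceD
        Zgrp_group latt_subgroup)
qed

lemma qmap_vimage_subgroup:
  assumes "subgroup H (Qgrp u)"
  shows "subgroup (qmap u -` H) Zgrp"
proof (rule group.subgroupI[OF Zgrp_group])
  show "qmap u -` H \<noteq> {}"
    using subgroup.one_closed[OF assms] qmap_zero[of u] by blast
next
  fix a b assume "a \<in> qmap u -` H" "b \<in> qmap u -` H"
  then show "inv\<^bsub>Zgrp\<^esub> a \<in> qmap u -` H" "a \<otimes>\<^bsub>Zgrp\<^esub> b \<in> qmap u -` H"
    using subgroup.m_inv_closed[OF assms] subgroup.m_closed[OF assms]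
    by (simp_all add: qmap_uminus qmap_add)
qed simp

lemma sum_self_in_latt_if_orders_two:
  assumes "\<forall>x\<in>carrier (Qgrp u). x \<noteq> \<one>\<^bsub>Qgrp u\<^esub> \<longrightarrow> group.ord (Qgrp u) x = 2"
  shows "y + y \<in> latt u"
proof -
  have "qmap u (y + y) = qmap u y \<otimes>\<^bsub>Qgrp u\<^esub> qmap u y" by (rule qmap_add)
  also have "\<dots> = \<one>\<^bsub>Qgrp u\<^esub>"
    using group.mult_self_eq_one_if_orders_two[OF Qgrp_group assms] by (simp add: Qgrp_carrier)
  also have "\<dots> = qmap u 0"
    by (rule qmap_zero [symmetric])
  finally show ?thesis by (simp add: qmap_eq_iff)
qed

lemma finite_scrW1:
  assumes "eventually_periodic u W"
  shows "finite (scrW1 u W)"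
proof (rule finite_subset)
  show "finite (scrW u W)" using assms unfolding eventually_periodic_def scrW_def by blast
qed (auto simp: scrW1_def)

lemma scrW1_subset: "scrW1 u W \<subseteq> W"
  by (auto simp: scrW1_def scrW_def)

lemma calW_add_pcone: "c \<in> calW u W \<Longrightarrow> p \<in> pcone u \<Longrightarrow> c + p \<in> W"
  unfolding calW_def scrW_def by blast

lemma scrW1_diff_calW: "s \<in> scrW1 u W \<Longrightarrow> c \<in> calW u W \<Longrightarrow> s - c \<notin> latt u"
  unfolding scrW1_def by blast

lemma descent_sum_bounded:
  assumes indep: "lin_indep_Z u" and evp: "eventually_periodic u W"
  obtains b where "\<And>c. \<forall>i. 0 \<le> c i \<Longrightarrow> w - lincomb u c \<in> W \<Longrightarrow> nat (sum c UNIV) \<le> b"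
proof -
  obtain F where F: "finite F" "W \<subseteq> {f + p | f p. f \<in> F \<and> p \<in> pcone u}"
    using evp unfolding eventually_periodic_def by blast
  define height where "height f = nat (sum (the_inv (lincomb u) (w - f)) UNIV)" for f
  have "nat (sum c UNIV) \<le> Max (height ` F)"
    if c: "\<forall>i. 0 \<le> c i" "w - lincomb u c \<in> W" for c
  proof -
    obtain f p where "f \<in> F" "p \<in> pcone u" "w - lincomb u c = f + p"
      using F(2) c(2) by blast
    then obtain c' where f: "f \<in> F" "w - lincomb u c = f + lincomb u c'" "\<forall>i. 0 \<le> c' i"
      unfolding pcone_eq_lincomb by blast
    then have "w - f = lincomb u (\<lambda>i. c i + c' i)"
      by (simp add: lincomb_add algebra_simps)
    then have "height f = nat (sum (\<lambda>i. c i + c' i) UNIV)"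
      unfolding height_def by (simp add: the_inv_f_f[OF lincomb_inj[OF indep]])
    also have "\<dots> \<ge> nat (sum c UNIV)"
      using c(1) f(3) by (intro nat_mono sum_mono) auto
    also have "height f \<le> Max (height ` F)"
      using F(1) f(1) by simp
    finally show ?thesis .
  qed
  then show ?thesis using that by blast
qed

lemma exists_calW_below:
  fixes u :: "'n::finite \<Rightarrow> int ^ 'n"
  assumes indep: "lin_indep_Z u" and evp: "eventually_periodic u W"
    and w: "w \<in> W" "w \<notin> scrW u W"
  shows "\<exists>c\<in>calW u W. w - c \<in> pcone u"
proof -
  define descends where
    "descends c \<longleftrightarrow> (\<forall>i. 0 \<le> c i) \<and> w - lincomb u c \<in> W - scrW u W" for c
  obtain b where b: "\<And>c. \<forall>i. 0 \<le> c i \<Longrightarrow> w - lincomb u c \<in> W \<Longrightarrow> nat (sum c UNIV) \<le> b"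
    using descent_sum_bounded[OF indep evp, where w = w] by blast
  have "descends (\<lambda>i. 0)" using w unfolding descends_def by simp
  moreover have "\<forall>c. descends c \<longrightarrow> nat (sum c UNIV) < Suc b"
    unfolding descends_def using b by (simp add: le_imp_less_Suc)
  ultimately obtain c0 where c0: "descends c0"
    and c0_max: "\<And>c. descends c \<Longrightarrow> nat (sum c UNIV) \<le> nat (sum c0 UNIV)"
    using ex_has_greatest_nat[of descends "\<lambda>i. 0" "\<lambda>c. nat (sum c UNIV)" "Suc b"] by blast
  define x0 where "x0 = w - lincomb u c0"
  have "y = x0" if y: "y \<in> (\<lambda>p. x0 - p) ` pcone u" "y \<in> W - scrW u W" for y
  proof -
    obtain p where p: "y = x0 - lincomb u p" "\<forall>i. 0 \<le> p i"
      using y(1) unfolding pcone_eq_lincomb by blast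
    have "w - lincomb u (\<lambda>i. c0 i + p i) = y"
      using p(1) by (simp add: x0_def lincomb_add)
    then have "descends (\<lambda>i. c0 i + p i)"
      using c0 p(2) y(2) unfolding descends_def by simp
    then have "nat (sum (\<lambda>i. c0 i + p i) UNIV) \<le> nat (sum c0 UNIV)"
      by (rule c0_max)
    then have "nat (sum c0 UNIV + sum p UNIV) \<le> nat (sum c0 UNIV)"
      by (simp only: sum.distrib)
    moreover have "0 \<le> sum p UNIV" "0 \<le> sum c0 UNIV"
      using p(2) c0 unfolding descends_def by (simp_all add: sum_nonneg)
    ultimately have "sum p UNIV = 0" by (simp add: nat_le_eq_zle)
    then have "p = (\<lambda>i. 0)"
      using p(2) sum_nonneg_eq_0_iff[of UNIV p] by auto
    then show "y = x0" using p(1) by simp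
  qed
  moreover have "x0 \<in> W - scrW u W"
    using c0 unfolding x0_def descends_def by blast
  moreover have "x0 \<in> (\<lambda>p. x0 - p) ` pcone u"
    using zero_in_pcone by (metis diff_zero image_eqI)
  ultimately have "(\<lambda>p. x0 - p) ` pcone u \<inter> (W - scrW u W) = {x0}"
    by blast
  then have "x0 \<in> calW u W"
    using \<open>x0 \<in> W - scrW u W\<close> by (simp add: calW_def)
  moreover have "w - x0 \<in> pcone u"
    using c0 unfolding x0_def descends_def pcone_eq_lincomb by auto
  ultimately show ?thesis by blast
qed

lemma exists_calW_cong:
  assumes "lin_indep_Z u" "eventually_periodic u W" "w \<in> W - scrW1 u W"
  shows "\<exists>c\<in>calW u W. w - c \<in> latt u"
proof (cases "w \<in> scrW u W")
  case True
  then show ?thesis using assms(3) unfolding scrW1_def by blast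
next
  case False
  then show ?thesis
    using exists_calW_below[OF assms(1,2)] assms(3) pcone_subset_latt by blast
qed

section \<open>A criterion for minimal complements\<close>

lemma exists_minimal_hitting_subset:
  assumes fin: "\<And>y. y \<in> Y \<Longrightarrow> finite (S y)" and hit: "\<And>y. y \<in> Y \<Longrightarrow> S y \<inter> C \<noteq> {}"
  shows "\<exists>M\<subseteq>C. (\<forall>y\<in>Y. S y \<inter> M \<noteq> {}) \<and> (\<forall>M'\<subset>M. \<exists>y\<in>Y. S y \<inter> M' = {})"
proof -
  define hitting where "hitting M \<longleftrightarrow> M \<subseteq> C \<and> (\<forall>y\<in>Y. S y \<inter> M \<noteq> {})" for M
  define complements where "complements = (\<lambda>M. C - M) ` Collect hitting"
  have "\<exists>N\<in>complements. \<forall>B\<in>complements. N \<subseteq> B \<longrightarrow> B = N"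
  proof (rule subset_Zorn)
    fix Ch assume ch: "subset.chain complements Ch"
    have "hitting (C - \<Union>Ch)"
      unfolding hitting_def
    proof (intro conjI ballI)
      fix y assume y: "y \<in> Y"
      show "S y \<inter> (C - \<Union>Ch) \<noteq> {}"
      proof
        assume "S y \<inter> (C - \<Union>Ch) = {}"
        then have "S y \<inter> C \<subseteq> \<Union>Ch" by blast
        moreover have "Ch \<noteq> {}" using \<open>S y \<inter> C \<subseteq> \<Union>Ch\<close> hit[OF y] by blast
        ultimately obtain B where "B \<in> Ch" "S y \<inter> C \<subseteq> B"
          using finite_subset_Union_chain[OF _ _ _ ch] fin[OF y] by (metis finite_Int)
        moreover obtain M where "hitting M" "B = C - M"
          using ch \<open>B \<in> Ch\<close> unfolding subset.chain_def complements_def by blast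
        ultimately show False using y unfolding hitting_def by blast
      qed
    qed blast
    moreover have "B \<subseteq> C - (C - \<Union>Ch)" if "B \<in> Ch" for B
      using ch that unfolding subset.chain_def complements_def by blast
    ultimately show "\<exists>U\<in>complements. \<forall>B\<in>Ch. B \<subseteq> U" unfolding complements_def by blast
  qed
  then obtain M where M: "hitting M"
    and max: "\<And>M'. hitting M' \<Longrightarrow> C - M \<subseteq> C - M' \<Longrightarrow> C - M' = C - M"
    unfolding complements_def by blast
  have "\<exists>y\<in>Y. S y \<inter> M' = {}" if "M' \<subset> M" for M'
  proof (rule ccontr)
    assume "\<not> ?thesis"
    then have "hitting M'" using \<open>M' \<subset> M\<close> M unfolding hitting_def by blast
    then have "C - M' = C - M" using max \<open>M' \<subset> M\<close> by blast
    then have "M' = M" using \<open>hitting M'\<close> M unfolding hitting_def by blast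
    then show False using \<open>M' \<subset> M\<close> by blast
  qed
  then show ?thesis using M unfolding hitting_def by blast
qed

lemma complement_if_hits_uncovered:
  fixes u :: "'n::finite \<Rightarrow> int ^ 'n"
  assumes evp: "eventually_periodic u W"
    and s: "s \<in> scrW1 u W"
    and separating: "\<And>k k' t. k \<in> K \<Longrightarrow> k' \<in> K \<Longrightarrow> t \<in> calW u W \<union> scrW1 u W \<Longrightarrow>
          k + s - k' - t \<in> latt u \<Longrightarrow> k = k'"
    and M_sub: "\<And>m. m \<in> M \<Longrightarrow> \<exists>k\<in>K. m - k \<in> latt u"
    and M_hits: "\<And>y. \<forall>k\<in>K. \<forall>c\<in>calW u W. y - k - c \<notin> latt u \<Longrightarrow> \<exists>a\<in>scrW1 u W. y - a \<in> M"
  shows "is_complement M W"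
proof -
  have "\<exists>m\<in>M. \<exists>w\<in>W. x = m + w" for x
  proof (cases "\<forall>k\<in>K. \<forall>c\<in>calW u W. x - k - c \<notin> latt u")
    case True
    then obtain a where "a \<in> scrW1 u W" "x - a \<in> M" using M_hits by blast
    then show ?thesis using scrW1_subset by force
  next
    case False
    then obtain k c where k: "k \<in> K" and c: "c \<in> calW u W" and xkc: "x - k - c \<in> latt u"
      by blast
    define E where "E = (\<lambda>a. a - s) ` {a \<in> scrW1 u W. a - s \<in> latt u}"
    have "finite E" unfolding E_def using finite_scrW1[OF evp] by simp
    then obtain q where q: "q \<in> pcone u" and qE: "\<forall>e\<in>E. q + e \<in> pcone u"
      using finite_latt_shift_into_pcone[of E u] unfolding E_def by blast
    have shift: "x - k - c - q \<in> latt u"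
      using latt_diff[OF xkc] q pcone_subset_latt by blast
    define y where "y = x - c + s - q"
    have "y - k' - c' \<notin> latt u" if k': "k' \<in> K" and c': "c' \<in> calW u W" for k' c'
    proof
      assume "y - k' - c' \<in> latt u"
      then have "k + s - k' - c' \<in> latt u"
        by (rule latt_diff_eqI[OF _ shift]) (simp add: y_def algebra_simps)
      moreover from this have "k = k'" using separating k k' c' by blast
      ultimately show False using scrW1_diff_calW[OF s c'] by simp
    qed
    then obtain a where a: "a \<in> scrW1 u W" and ya: "y - a \<in> M" using M_hits by blast
    then obtain k'' where k'': "k'' \<in> K" "y - a - k'' \<in> latt u" using M_sub by blast
    have "k + s - k'' - a \<in> latt u"
      by (rule latt_diff_eqI[OF k''(2) shift]) (simp add: y_def algebra_simps)
    moreover from this have "k = k''" using separating k k''(1) a by blast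
    ultimately have "a - s \<in> latt u"
      using latt_uminus by fastforce
    then have "c + (q + (a - s)) \<in> W"
      using a qE calW_add_pcone[OF c] unfolding E_def by blast
    moreover have "x = (y - a) + (c + (q + (a - s)))" unfolding y_def by (simp add: algebra_simps)
    ultimately show ?thesis using ya by blast
  qed
  then show ?thesis unfolding is_complement_def by blast
qed

lemma not_complement_if_misses_uncovered:
  fixes u :: "'n::finite \<Rightarrow> int ^ 'n"
  assumes indep: "lin_indep_Z u" and evp: "eventually_periodic u W"
    and M_sub: "\<And>m. m \<in> M \<Longrightarrow> \<exists>k\<in>K. m - k \<in> latt u"
    and y_uncovered: "\<forall>k\<in>K. \<forall>c\<in>calW u W. y - k - c \<notin> latt u"
    and y_missed: "\<forall>a\<in>scrW1 u W. y - a \<notin> M"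
  shows "\<not> is_complement M W"
proof
  assume "is_complement M W"
  then have "y \<in> {m + w | m w. m \<in> M \<and> w \<in> W}"
    unfolding is_complement_def by simp
  then obtain m w where y: "y = m + w" and m: "m \<in> M" and w: "w \<in> W"
    by blast
  show False
  proof (cases "w \<in> scrW1 u W")
    case True
    then show False using bspec[OF y_missed True] y m by simp
  next
    case False
    then obtain c where c: "c \<in> calW u W" "w - c \<in> latt u"
      using exists_calW_cong[OF indep evp] w by blast
    obtain k where k: "k \<in> K" "m - k \<in> latt u" using M_sub m by blast
    have "y - k - c \<in> latt u"
      by (rule latt_add_eqI[OF k(2) c(2)]) (simp add: y algebra_simps)
    then show False using y_uncovered k(1) c(1) by blast
  qed
qed

lemma minimal_complement_criterion:
  fixes u :: "'n::finite \<Rightarrow> int ^ 'n"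
  assumes indep: "lin_indep_Z u" and evp: "eventually_periodic u W"
    and covers: "\<And>x. \<exists>k\<in>K. \<exists>t\<in>calW u W \<union> scrW1 u W. x - k - t \<in> latt u"
    and s: "s \<in> scrW1 u W"
    and separating: "\<And>k k' t. k \<in> K \<Longrightarrow> k' \<in> K \<Longrightarrow> t \<in> calW u W \<union> scrW1 u W \<Longrightarrow>
          k + s - k' - t \<in> latt u \<Longrightarrow> k = k'"
  shows "\<exists>M. is_minimal_complement M W"
proof -
  define C where "C = {x. \<exists>k\<in>K. x - k \<in> latt u}"
  define Y where "Y = {y. \<forall>k\<in>K. \<forall>c\<in>calW u W. y - k - c \<notin> latt u}"
  define S where "S y = (\<lambda>a. y - a) ` scrW1 u W" for y
  \<comment> \<open>\<open>C = K + L\<close>, and \<open>M\<close> meets \<open>S y\<close> iff \<open>y \<in> M + scrW1 u W\<close>.\<close>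
  have S_disjoint_iff: "S y \<inter> N = {} \<longleftrightarrow> (\<forall>a\<in>scrW1 u W. y - a \<notin> N)" for y N
    unfolding S_def by blast
  have hit: "S y \<inter> C \<noteq> {}" if "y \<in> Y" for y
  proof -
    obtain k t where k: "k \<in> K" and t: "t \<in> calW u W \<union> scrW1 u W"
      and ykt: "y - k - t \<in> latt u"
      using covers[of y] by blast
    have "t \<notin> calW u W" using that k ykt unfolding Y_def by blast
    then have "t \<in> scrW1 u W" using t by blast
    moreover have "y - t - k \<in> latt u" using ykt by (simp add: algebra_simps)
    then have "y - t \<in> C" unfolding C_def using k by blast
    ultimately show ?thesis by (auto simp: S_disjoint_iff)
  qed
  have fin: "finite (S y)" for y unfolding S_def using finite_scrW1[OF evp] by simp
  obtain M where M_sub: "M \<subseteq> C" and M_hits: "\<forall>y\<in>Y. S y \<inter> M \<noteq> {}"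
    and M_min: "\<forall>M'\<subset>M. \<exists>y\<in>Y. S y \<inter> M' = {}"
    using exists_minimal_hitting_subset[of Y S C, OF fin hit] by blast
  have M_sub_K: "\<exists>k\<in>K. m - k \<in> latt u" if "m \<in> M" for m
    using that M_sub unfolding C_def by blast
  have M_hits_uncovered: "\<exists>a\<in>scrW1 u W. y - a \<in> M"
    if "\<forall>k\<in>K. \<forall>c\<in>calW u W. y - k - c \<notin> latt u" for y
  proof -
    have "y \<in> Y" unfolding Y_def using that by simp
    then show ?thesis using M_hits by (simp add: S_disjoint_iff)
  qed
  have "is_complement M W"
    using evp s separating M_sub_K M_hits_uncovered by (rule complement_if_hits_uncovered)
  moreover have "\<not> is_complement M' W" if sub: "M' \<subset> M" for M'
  proof -
    obtain y where y: "y \<in> Y" and missed: "S y \<inter> M' = {}"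
      using M_min[rule_format, OF sub] ..
    from y have uncovered: "\<forall>k\<in>K. \<forall>c\<in>calW u W. y - k - c \<notin> latt u"
      by (simp add: Y_def)
    from missed have missed: "\<forall>a\<in>scrW1 u W. y - a \<notin> M'"
      by (simp add: S_disjoint_iff)
    have "\<exists>k\<in>K. m - k \<in> latt u" if "m \<in> M'" for m
      using M_sub_K that sub by blast
    then show ?thesis
      by (rule not_complement_if_misses_uncovered[OF indep evp _ uncovered missed])
  qed
  ultimately show ?thesis unfolding is_minimal_complement_def by blast
qed

section \<open>The three cases\<close>

lemma minimal_complement_if_coset:
  fixes u :: "'n::finite \<Rightarrow> int ^ 'n"
  assumes indep: "lin_indep_Z u" and evp: "eventually_periodic u W"
    and s: "s \<in> scrW1 u W"
    and H: "subgroup H Zgrp" and latt_sub: "latt u \<subseteq> H"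
    and coset: "\<And>x. (\<exists>t\<in>calW u W \<union> scrW1 u W. x - t \<in> latt u) \<longleftrightarrow> x - g \<in> H"
  shows "\<exists>M. is_minimal_complement M W"
proof -
  define rep where "rep x = (SOME k. x - k \<in> H)" for x
  have zero: "0 \<in> H" using subgroup.one_closed[OF H] by simp
  have rep: "x - rep x \<in> H" for x
    unfolding rep_def by (rule someI[of _ x]) (simp add: zero)
  have rep_eq: "rep x = rep y" if "x - y \<in> H" for x y
  proof -
    have "x - k \<in> H \<longleftrightarrow> y - k \<in> H" for k
    proof
      assume "x - k \<in> H"
      then show "y - k \<in> H" by (rule Zgrp_subgroup_diff_eqI[OF H _ that]) simp
    next
      assume "y - k \<in> H"
      then show "x - k \<in> H" by (rule Zgrp_subgroup_add_eqI[OF H that]) simp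
    qed
    then show ?thesis unfolding rep_def by simp
  qed
  have T_coset: "t - g \<in> H" if "t \<in> calW u W \<union> scrW1 u W" for t
  proof -
    have "t - t \<in> latt u" by (simp add: zero_in_latt)
    then show ?thesis using coset[of t] that by blast
  qed
  show ?thesis
  proof (rule minimal_complement_criterion[OF indep evp _ s, of "range rep"])
    fix x
    have "x - rep (x - g) - g \<in> H"
      by (rule Zgrp_subgroup_add_eqI[OF H rep[of "x - g"] zero]) (simp add: algebra_simps)
    then obtain t where "t \<in> calW u W \<union> scrW1 u W" "x - rep (x - g) - t \<in> latt u"
      using coset by blast
    then show "\<exists>k\<in>range rep. \<exists>t\<in>calW u W \<union> scrW1 u W. x - k - t \<in> latt u" by blast
  next
    fix k k' t assume k: "k \<in> range rep" and k': "k' \<in> range rep"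
      and t: "t \<in> calW u W \<union> scrW1 u W" and kst: "k + s - k' - t \<in> latt u"
    obtain a b where a: "k = rep a" and b: "k' = rep b" using k k' by blast
    have "k + s - k' - t \<in> H" using kst latt_sub by blast
    moreover have "(s - g) - (t - g) \<in> H"
      using Zgrp_subgroup_diff[OF H T_coset T_coset] s t by blast
    ultimately have "k - k' \<in> H"
      by (rule Zgrp_subgroup_diff_eqI[OF H]) (simp add: algebra_simps)
    then have "(a - rep a) + (rep a - rep b) \<in> H"
      unfolding a b by (rule Zgrp_subgroup_add[OF H rep])
    then have "a - b \<in> H"
      by (rule Zgrp_subgroup_diff_eqI[OF H _ rep[of b]]) (simp add: algebra_simps)
    then show "k = k'" unfolding a b by (rule rep_eq)
  qed
qed

lemma minimal_complement_if_image_coset: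
  fixes u :: "'n::finite \<Rightarrow> int ^ 'n"
  assumes indep: "lin_indep_Z u" and evp: "eventually_periodic u W"
    and ne: "scrW1 u W \<noteq> {}"
    and g: "g \<in> carrier (Qgrp u)" and H: "subgroup H (Qgrp u)"
    and image: "qmap u ` (calW u W \<union> scrW1 u W) = (\<lambda>h. g \<otimes>\<^bsub>Qgrp u\<^esub> h) ` H"
  shows "\<exists>M. is_minimal_complement M W"
proof -
  interpret Q: group "Qgrp u" by (rule Qgrp_group)
  obtain g0 where g0: "g = qmap u g0" using g by (auto simp: Qgrp_carrier)
  obtain s where s: "s \<in> scrW1 u W" using ne by blast
  have "latt u \<subseteq> qmap u -` H"
  proof
    fix l assume "l \<in> latt u"
    then have "qmap u l = qmap u 0" by (simp add: qmap_eq_iff)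
    also have "\<dots> = \<one>\<^bsub>Qgrp u\<^esub>"
      by (rule qmap_zero)
    finally show "l \<in> qmap u -` H" using subgroup.one_closed[OF H] by simp
  qed
  moreover have "(\<exists>t\<in>calW u W \<union> scrW1 u W. x - t \<in> latt u) \<longleftrightarrow> x - g0 \<in> qmap u -` H" for x
  proof -
    have "(\<exists>t\<in>calW u W \<union> scrW1 u W. x - t \<in> latt u) \<longleftrightarrow>
        qmap u x \<in> qmap u ` (calW u W \<union> scrW1 u W)"
      by (auto simp: qmap_eq_iff)
    also have "\<dots> \<longleftrightarrow> inv\<^bsub>Qgrp u\<^esub> g \<otimes>\<^bsub>Qgrp u\<^esub> qmap u x \<in> H"
      unfolding image using Q.mem_left_translate_iff[OF g subgroup.subset[OF H]]
      by (simp add: Qgrp_carrier)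
    also have "inv\<^bsub>Qgrp u\<^esub> g \<otimes>\<^bsub>Qgrp u\<^esub> qmap u x = qmap u (- g0 + x)"
      by (simp only: g0 qmap_add qmap_uminus)
    finally show ?thesis by simp
  qed
  ultimately show ?thesis
    by (rule minimal_complement_if_coset[OF indep evp s qmap_vimage_subgroup[OF H]])
qed

lemma minimal_complement_if_two_classes:
  fixes u :: "'n::finite \<Rightarrow> int ^ 'n"
  assumes indep: "lin_indep_Z u" and evp: "eventually_periodic u W"
    and ne: "scrW1 u W \<noteq> {}"
    and orders: "\<forall>x\<in>carrier (Qgrp u). x \<noteq> \<one>\<^bsub>Qgrp u\<^esub> \<longrightarrow> group.ord (Qgrp u) x = 2"
    and a: "qmap u ` scrW1 u W = {a}" and b: "qmap u ` calW u W = {b}"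
  shows "\<exists>M. is_minimal_complement M W"
proof -
  interpret Q: group "Qgrp u" by (rule Qgrp_group)
  have "a \<in> qmap u ` scrW1 u W" "b \<in> qmap u ` calW u W" using a b by simp_all
  then have carrier: "a \<in> carrier (Qgrp u)" "b \<in> carrier (Qgrp u)"
    unfolding Qgrp_carrier by blast+
  have "qmap u ` (calW u W \<union> scrW1 u W) = {a, b}" by (auto simp: image_Un a b)
  then show ?thesis
    using minimal_complement_if_image_coset[OF indep evp ne carrier(2)]
      Q.pair_eq_left_coset_if_exponent_two[OF Q.mult_self_eq_one_if_orders_two[OF orders] carrier]
    by simp
qed

lemma minimal_complement_if_one_class_missed:
  fixes u :: "'n::finite \<Rightarrow> int ^ 'n"
  assumes indep: "lin_indep_Z u" and evp: "eventually_periodic u W"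
    and ne: "scrW1 u W \<noteq> {}"
    and orders: "\<forall>x\<in>carrier (Qgrp u). x \<noteq> \<one>\<^bsub>Qgrp u\<^esub> \<longrightarrow> group.ord (Qgrp u) x = 2"
    and missed: "carrier (Qgrp u) - qmap u ` (scrW1 u W \<union> calW u W) = {c}"
  shows "\<exists>M. is_minimal_complement M W"
proof -
  have "c \<in> carrier (Qgrp u)" using missed by blast
  then obtain c0 where c0: "c = qmap u c0" by (auto simp: Qgrp_carrier)
  obtain s where s: "s \<in> scrW1 u W" using ne by blast
  have two: "y + y \<in> latt u" for y by (rule sum_self_in_latt_if_orders_two[OF orders])
  have coset: "(\<exists>t\<in>calW u W \<union> scrW1 u W. x - t \<in> latt u) \<longleftrightarrow> x - c0 \<notin> latt u" for x
  proof -
    have "(\<exists>t\<in>calW u W \<union> scrW1 u W. x - t \<in> latt u) \<longleftrightarrow>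
        qmap u x \<in> qmap u ` (scrW1 u W \<union> calW u W)"
      by (auto simp: qmap_eq_iff)
    also have "\<dots> \<longleftrightarrow> qmap u x \<noteq> c"
      using missed by (auto simp: Qgrp_carrier)
    finally show ?thesis by (simp add: c0 qmap_eq_iff)
  qed
  define d where "d = s + c0"
  show ?thesis
  proof (rule minimal_complement_criterion[OF indep evp _ s, of "{0, d}"])
    fix x
    show "\<exists>k\<in>{0, d}. \<exists>t\<in>calW u W \<union> scrW1 u W. x - k - t \<in> latt u"
    proof (cases "x - c0 \<in> latt u")
      case True
      have "x - d - s \<in> latt u"
        by (rule latt_diff_eqI[OF True two[of s]]) (simp add: d_def algebra_simps)
      then show ?thesis using s by blast
    next
      case False
      then show ?thesis using coset[of x] by auto
    qed
  next
    fix k k' t assume k: "k \<in> {0, d}" and k': "k' \<in> {0, d}"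
      and t: "t \<in> calW u W \<union> scrW1 u W" and kst: "k + s - k' - t \<in> latt u"
    show "k = k'"
    proof (rule ccontr)
      assume "k \<noteq> k'"
      then have "k - k' + d \<in> latt u" using k k' two[of d] zero_in_latt by auto
      then have "t + c0 \<in> latt u"
        by (rule latt_diff_eqI[OF _ kst]) (simp add: d_def algebra_simps)
      then have "t - c0 \<in> latt u"
        by (rule latt_diff_eqI[OF _ two[of c0]]) (simp add: algebra_simps)
      moreover have "t - t \<in> latt u" by (simp add: zero_in_latt)
      ultimately show False using coset[of t] t by blast
    qed
  qed
qed

theorem proposition4p21:
  fixes u :: "'n::finite \<Rightarrow> int ^ 'n" and W :: "(int ^ 'n) set"
  assumes indep: "lin_indep_Z u"
    and evp: "eventually_periodic u W"
    and ne: "scrW1 u W \<noteq> {}"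
    and cond: "(\<exists>g \<in> carrier (Qgrp u). \<exists>H. subgroup H (Qgrp u) \<and>
                   qmap u ` (calW u W \<union> scrW1 u W) = (\<lambda>h. g \<otimes>\<^bsub>Qgrp u\<^esub> h) ` H)
            \<or> ((\<forall>x \<in> carrier (Qgrp u). x \<noteq> \<one>\<^bsub>Qgrp u\<^esub> \<longrightarrow> group.ord (Qgrp u) x = 2)
               \<and> ((\<exists>a. qmap u ` scrW1 u W = {a}) \<and> (\<exists>b. qmap u ` calW u W = {b})
                  \<or> (\<exists>c. carrier (Qgrp u) - qmap u ` (scrW1 u W \<union> calW u W) = {c})))"
  shows "\<exists>M. is_minimal_complement M W"
  using cond
proof (elim disjE conjE exE bexE)
  fix g H
  assume "g \<in> carrier (Qgrp u)" "subgroup H (Qgrp u)"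
    "qmap u ` (calW u W \<union> scrW1 u W) = (\<lambda>h. g \<otimes>\<^bsub>Qgrp u\<^esub> h) ` H"
  then show ?thesis by (rule minimal_complement_if_image_coset[OF indep evp ne])
next
  fix a b
  assume "\<forall>x\<in>carrier (Qgrp u). x \<noteq> \<one>\<^bsub>Qgrp u\<^esub> \<longrightarrow> group.ord (Qgrp u) x = 2"
    "qmap u ` scrW1 u W = {a}" "qmap u ` calW u W = {b}"
  then show ?thesis by (rule minimal_complement_if_two_classes[OF indep evp ne])
next
  fix c
  assume "\<forall>x\<in>carrier (Qgrp u). x \<noteq> \<one>\<^bsub>Qgrp u\<^esub> \<longrightarrow> group.ord (Qgrp u) x = 2"
    "carrier (Qgrp u) - qmap u ` (scrW1 u W \<union> calW u W) = {c}"
  then show ?thesis by (rule minimal_complement_if_one_class_missed[OF indep evp ne])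
qed

end
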